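(* The equation $$((a\to b)\to(c\to b))\cap(a\to c)\cap(b\to a)\le c\to a$$ holds in every orthomodular lattice admitting a strong set of states, but fails in the orthomodular lattice MG1.
   Context: Write $a\to b=a'\cup(a\cap b)$. A state on an ortholattice $L$ is a map $m:L\to[0,1]$ with $m(1)=1$ and $a\le b'\Rightarrow m(a\cup b)=m(a)+m(b)$. $L$ admits a strong set of states if there is a nonempty set $S$ of states such that for all $a,b\in L$ with $a\not\le b$ some $m\in S$ has $m(a)=1$ and $m(b)\ne1$. MG1 is the orthomodular lattice of the Greechie diagram with 19 atoms $v,e_1,e_2,e_3,a_1,a_2,a_3,b_1,b_2,b_3,c_1,c_2,c_3,d_1,d_2,d_3,f_1,f_2,u$ and 11 three-atom blocks: $\{v,e_1,a_1\}$, $\{v,e_2,a_2\}$, $\{v,e_3,a_3\}$, $\{a_1,b_1,c_1\}$, $\{a_2,b_2,c_2\}$, $\{a_3,b_3,c_3\}$, $\{b_1,b_2,b_3\}$, $\{c_1,f_1,d_1\}$, $\{c_2,f_2,d_2\}$, $\{c_3,u,d_3\}$, $\{d_1,d_2,d_3\}$. That is, it is the unique orthomodular lattice whose atoms are these and whose maximal Boolean subalgebras are generated by these blocks; each block consists of mutually orthogonal atoms with join $1$. *)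

theory Defs
  imports Complex_Main "HOL-Library.Complemented_Lattices"
begin

definition oimp :: "('a \<Rightarrow> 'a \<Rightarrow> 'a) \<Rightarrow> ('a \<Rightarrow> 'a \<Rightarrow> 'a) \<Rightarrow> ('a \<Rightarrow> 'a)
    \<Rightarrow> 'a \<Rightarrow> 'a \<Rightarrow> 'a" where
  "oimp sup' inf' compl' a b = sup' (compl' a) (inf' a b)"

definition eq12 :: "('a \<Rightarrow> 'a \<Rightarrow> bool) \<Rightarrow> ('a \<Rightarrow> 'a \<Rightarrow> 'a) \<Rightarrow> ('a \<Rightarrow> 'a \<Rightarrow> 'a)
    \<Rightarrow> ('a \<Rightarrow> 'a) \<Rightarrow> 'a \<Rightarrow> 'a \<Rightarrow> 'a \<Rightarrow> bool" where
  "eq12 le' sup' inf' compl' a b c =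
     (let imp = oimp sup' inf' compl' in
      le' (inf' (inf' (imp (imp a b) (imp c b)) (imp a c)) (imp b a)) (imp c a))"

definition is_state :: "('a::orthocomplemented_lattice \<Rightarrow> real) \<Rightarrow> bool" where
  "is_state m \<longleftrightarrow> (\<forall>a. 0 \<le> m a \<and> m a \<le> 1) \<and> m top = 1 \<and>
     (\<forall>a b. a \<le> - b \<longrightarrow> m (sup a b) = m a + m b)"

definition admits_strong_set_of_states :: "'a::orthocomplemented_lattice itself \<Rightarrow> bool" where
  "admits_strong_set_of_states _ \<longleftrightarrow>
     (\<exists>S :: ('a \<Rightarrow> real) set. S \<noteq> {} \<and> (\<forall>m\<in>S. is_state m) \<and>
        (\<forall>a b :: 'a. \<not> a \<le> b \<longrightarrow> (\<exists>m\<in>S. m a = 1 \<and> m b \<noteq> 1)))"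

datatype mg1_atom = v | e1 | e2 | e3 | a1 | a2 | a3 | b1 | b2 | b3
  | c1 | c2 | c3 | d1 | d2 | d3 | f1 | f2 | u

definition mg1_blocks :: "mg1_atom set list" where
  "mg1_blocks = [{v,e1,a1}, {v,e2,a2}, {v,e3,a3}, {a1,b1,c1}, {a2,b2,c2}, {a3,b3,c3},
                 {b1,b2,b3}, {c1,f1,d1}, {c2,f2,d2}, {c3,u,d3}, {d1,d2,d3}]"

definition mg1_orth :: "mg1_atom \<Rightarrow> mg1_atom \<Rightarrow> bool" where
  "mg1_orth p q \<longleftrightarrow> p \<noteq> q \<and> (\<exists>B\<in>set mg1_blocks. p \<in> B \<and> q \<in> B)"

text \<open>Since every block has three atoms, each block generates the 8-element Boolean algebra
  {0, p, q, r, p', q', r', 1} with p' = q \<union> r etc.\<close>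
datatype mg1 = Zero | One | At mg1_atom | Co mg1_atom

fun mg1_le :: "mg1 \<Rightarrow> mg1 \<Rightarrow> bool" where
  "mg1_le Zero _ = True"
| "mg1_le _ One = True"
| "mg1_le (At p) (At q) = (p = q)"
| "mg1_le (At p) (Co q) = mg1_orth p q"
| "mg1_le (Co p) (Co q) = (p = q)"
| "mg1_le _ _ = False"

definition mg1_less :: "mg1 \<Rightarrow> mg1 \<Rightarrow> bool" where
  "mg1_less x y \<longleftrightarrow> mg1_le x y \<and> x \<noteq> y"

definition mg1_sup :: "mg1 \<Rightarrow> mg1 \<Rightarrow> mg1" where
  "mg1_sup x y = (THE z. mg1_le x z \<and> mg1_le y z \<and>
                        (\<forall>w. mg1_le x w \<and> mg1_le y w \<longrightarrow> mg1_le z w))"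

definition mg1_inf :: "mg1 \<Rightarrow> mg1 \<Rightarrow> mg1" where
  "mg1_inf x y = (THE z. mg1_le z x \<and> mg1_le z y \<and>
                        (\<forall>w. mg1_le w x \<and> mg1_le w y \<longrightarrow> mg1_le w z))"

fun mg1_compl :: "mg1 \<Rightarrow> mg1" where
  "mg1_compl Zero = One"
| "mg1_compl One = Zero"
| "mg1_compl (At p) = Co p"
| "mg1_compl (Co p) = At p"

definition mg1_minus :: "mg1 \<Rightarrow> mg1 \<Rightarrow> mg1" where
  "mg1_minus x y = mg1_inf x (mg1_compl y)"

end

theory Submission
  imports Defs
begin

(* For a state m on an orthomodular lattice, m(x -> y) = 1 - m x + m(x /\ y)
   and m is monotone, so m(x -> y) = 1 exactly when m(x /\ y) = m x.  If m gives value 1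
   to the left-hand side of the inequality, it gives value 1 to each of the three
   conjuncts; linear arithmetic on the resulting relations yields m c <= m a, hence
   m(c -> a) = 1.  A strong set of states separates the order (x <= y as soon as every
   state with m x = 1 has m y = 1), which turns this into the inequality itself.  In MG1 the join of two distinct atoms is 1 unless they have a common
   orthogonal atom r, in which case it is r'; two distinct atoms have at most one such r,
   and orthogonal atoms always have one (the third atom of their block).  This gives an
   explicit join, the meet follows by De Morgan, and the lattice axioms and the
   orthomodular law become finite case checks.  The inequality fails for
   a = b1', b = c2', c = d1'. *)

lemma oimp_class: "oimp sup inf uminus x y = sup (- x) (inf x y)"
  by (simp add: oimp_def)

lemma state_compl:
  fixes m :: "'a::orthocomplemented_lattice \<Rightarrow> real"
  assumes "is_state m"
  shows "m (- x) = 1 - m x"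
proof -
  have "x \<le> - (- x)" by simp
  then have "m (sup x (- x)) = m x + m (- x)"
    using assms unfolding is_state_def by blast
  moreover have "m (sup x (- x)) = 1"
    using assms unfolding is_state_def by simp
  ultimately show ?thesis by linarith
qed

text \<open>The value of an implication: x' and x \<sqinter> y are orthogonal, so additivity applies.\<close>
lemma state_imp:
  fixes m :: "'a::orthocomplemented_lattice \<Rightarrow> real"
  assumes "is_state m"
  shows "m (sup (- x) (inf x y)) = 1 - m x + m (inf x y)"
proof -
  have "- x \<le> - (inf x y)" by (simp add: compl_mono)
  then have "m (sup (- x) (inf x y)) = m (- x) + m (inf x y)"
    using assms unfolding is_state_def by blast
  then show ?thesis using state_compl[OF assms] by simp
qed

text \<open>States are monotone on orthomodular lattices: by orthomodularity y is the
  orthogonal join of x and x' \<sqinter> y.\<close>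
lemma state_mono:
  fixes m :: "'a::orthomodular_lattice \<Rightarrow> real"
  assumes "is_state m" and "x \<le> y"
  shows "m x \<le> m y"
proof -
  have split: "sup x (inf (- x) y) = y" using orthomodular[OF assms(2)] .
  have "x \<le> - inf (- x) y" by (metis compl_mono inf.cobounded1 ortho_involution)
  then have "m y = m x + m (inf (- x) y)"
    using assms(1) split unfolding is_state_def by metis
  moreover have "0 \<le> m (inf (- x) y)" using assms(1) unfolding is_state_def by blast
  ultimately show ?thesis by simp
qed

lemma state_imp_one:
  fixes m :: "'a::orthocomplemented_lattice \<Rightarrow> real"
  assumes "is_state m"
  shows "m (sup (- x) (inf x y)) = 1 \<longleftrightarrow> m (inf x y) = m x"
  using state_imp[OF assms] by simp

lemma state_one_mono:
  fixes m :: "'a::orthomodular_lattice \<Rightarrow> real"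
  assumes "is_state m" and "x \<le> y" and "m x = 1"
  shows "m y = 1"
  using state_mono[OF assms(1,2)] assms(1,3) unfolding is_state_def by (metis order_antisym)

lemma state_eq12:
  fixes m :: "'a::orthomodular_lattice \<Rightarrow> real"
  defines "imp \<equiv> \<lambda>x y. sup (- x) (inf x y)"
  assumes m: "is_state m"
    and lhs: "m (inf (inf (imp (imp a b) (imp c b)) (imp a c)) (imp b a)) = 1"
  shows "m (imp c a) = 1"
proof -
  have one: "m z = 1" if "inf (inf (imp (imp a b) (imp c b)) (imp a c)) (imp b a) \<le> z" for z
    using state_one_mono[OF m that lhs] .
  have "m (imp a c) = 1" by (rule one) (simp add: le_infI1)
  then have ac: "m (inf a c) = m a" using state_imp_one[OF m] unfolding imp_def by blast
  have "m (imp b a) = 1" by (rule one) simp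
  then have "m (inf b a) = m b" using state_imp_one[OF m] unfolding imp_def by blast
  then have ab: "m (inf a b) = m b" by (simp add: inf_commute)
  have "m (imp (imp a b) (imp c b)) = 1" by (rule one) (simp add: le_infI1)
  then have outer: "m (inf (imp a b) (imp c b)) = m (imp a b)"
    using state_imp_one[OF m] unfolding imp_def by blast
  have "m (inf (imp a b) (imp c b)) \<le> m (imp c b)" by (rule state_mono[OF m]) simp
  moreover have "m (inf c b) \<le> m b" by (rule state_mono[OF m]) simp
  ultimately have "m c \<le> m a"
    using outer ab state_imp[OF m, of a b] state_imp[OF m, of c b] unfolding imp_def by linarith
  moreover have "m (inf c a) \<le> m c" by (rule state_mono[OF m]) simp
  moreover have "m (inf c a) = m a" using ac by (simp add: inf_commute)
  ultimately show ?thesis using state_imp_one[OF m, of c a] unfolding imp_def by linarith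
qed

lemma strong_states_order:
  assumes "admits_strong_set_of_states TYPE('a::orthocomplemented_lattice)"
    and "\<And>m. is_state m \<Longrightarrow> m x = 1 \<Longrightarrow> m y = 1"
  shows "x \<le> (y :: 'a)"
  using assms unfolding admits_strong_set_of_states_def by blast

theorem eq12_strong_states:
  assumes "admits_strong_set_of_states TYPE('a::orthomodular_lattice)"
  shows "eq12 (\<le>) sup inf uminus a b (c :: 'a)"
  unfolding eq12_def Let_def oimp_class
  by (rule strong_states_order[OF assms]) (rule state_eq12)

fun mg1_neighbours :: "mg1_atom \<Rightarrow> mg1_atom list" where
  "mg1_neighbours v = [e1, e2, e3, a1, a2, a3]"
| "mg1_neighbours e1 = [v, a1]"
| "mg1_neighbours e2 = [v, a2]"
| "mg1_neighbours e3 = [v, a3]"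
| "mg1_neighbours a1 = [v, e1, b1, c1]"
| "mg1_neighbours a2 = [v, e2, b2, c2]"
| "mg1_neighbours a3 = [v, e3, b3, c3]"
| "mg1_neighbours b1 = [a1, b2, b3, c1]"
| "mg1_neighbours b2 = [a2, b1, b3, c2]"
| "mg1_neighbours b3 = [a3, b1, b2, c3]"
| "mg1_neighbours c1 = [a1, b1, d1, f1]"
| "mg1_neighbours c2 = [a2, b2, d2, f2]"
| "mg1_neighbours c3 = [a3, b3, d3, u]"
| "mg1_neighbours d1 = [c1, d2, d3, f1]"
| "mg1_neighbours d2 = [c2, d1, d3, f2]"
| "mg1_neighbours d3 = [c3, d1, d2, u]"
| "mg1_neighbours f1 = [c1, d1]"
| "mg1_neighbours f2 = [c2, d2]"
| "mg1_neighbours u = [c3, d3]"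

lemma mg1_orth_neighbours: "mg1_orth p q \<longleftrightarrow> q \<in> set (mg1_neighbours p)"
  unfolding mg1_orth_def mg1_blocks_def by (cases p; cases q; simp)

lemma mg1_orth_sym: "mg1_orth p q \<Longrightarrow> mg1_orth q p"
  unfolding mg1_orth_def by blast

lemma mg1_orth_irrefl: "\<not> mg1_orth p p"
  unfolding mg1_orth_def by blast

definition mg1_common :: "mg1_atom \<Rightarrow> mg1_atom \<Rightarrow> mg1_atom list" where
  "mg1_common p q = filter (\<lambda>r. r \<in> set (mg1_neighbours q)) (mg1_neighbours p)"

lemma mg1_common_iff: "r \<in> set (mg1_common p q) \<longleftrightarrow> mg1_orth p r \<and> mg1_orth q r"
  unfolding mg1_common_def mg1_orth_neighbours by auto

text \<open>No two blocks share two atoms: distinct atoms have at most one common neighbour.\<close>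
lemma mg1_common_at_most_one:
  assumes "p \<noteq> q"
  shows "mg1_common p q = [] \<or> (\<exists>r. mg1_common p q = [r])"
proof -
  have "length (mg1_common p q) \<le> 1"
    using assms unfolding mg1_common_def by (cases p; cases q; simp)
  then show ?thesis by (cases "mg1_common p q" rule: list.exhaust) auto
qed

text \<open>Orthogonal atoms lie in a block, whose third atom is orthogonal to both.\<close>
lemma mg1_common_of_orth: "mg1_orth p q \<Longrightarrow> mg1_common p q \<noteq> []"
  unfolding mg1_common_def mg1_orth_neighbours by (cases p; cases q; simp)

fun mg1_join :: "mg1 \<Rightarrow> mg1 \<Rightarrow> mg1" where
  "mg1_join Zero y = y"
| "mg1_join One y = One"
| "mg1_join (At p) Zero = At p"
| "mg1_join (At p) One = One"
| "mg1_join (At p) (At q) =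
     (if p = q then At p else (case mg1_common p q of [r] \<Rightarrow> Co r | _ \<Rightarrow> One))"
| "mg1_join (At p) (Co q) = (if mg1_orth p q then Co q else One)"
| "mg1_join (Co p) Zero = Co p"
| "mg1_join (Co p) One = One"
| "mg1_join (Co p) (At q) = (if mg1_orth q p then Co p else One)"
| "mg1_join (Co p) (Co q) = (if p = q then Co p else One)"

definition mg1_is_lub :: "mg1 \<Rightarrow> mg1 \<Rightarrow> mg1 \<Rightarrow> bool" where
  "mg1_is_lub x y z \<longleftrightarrow>
     mg1_le x z \<and> mg1_le y z \<and> (\<forall>w. mg1_le x w \<and> mg1_le y w \<longrightarrow> mg1_le z w)"

lemma mg1_le_refl: "mg1_le x x"
  by (cases x) auto

lemma mg1_le_antisym: "mg1_le x y \<Longrightarrow> mg1_le y x \<Longrightarrow> x = y"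
  by (cases x; cases y) (auto dest: mg1_orth_sym simp: mg1_orth_irrefl)

lemma mg1_le_trans: "mg1_le x y \<Longrightarrow> mg1_le y z \<Longrightarrow> mg1_le x z"
  by (cases x; cases y; cases z) auto

lemma mg1_le_One: "mg1_le x One"
  by (cases x) auto

lemma mg1_compl_compl: "mg1_compl (mg1_compl x) = x"
  by (cases x) auto

lemma mg1_le_compl_iff: "mg1_le (mg1_compl y) (mg1_compl x) \<longleftrightarrow> mg1_le x y"
  by (cases x; cases y) (auto dest: mg1_orth_sym)

text \<open>The only nontrivial join: two distinct atoms are bounded by a coatom r' exactly
  when r is a common neighbour, and there is at most one.\<close>
lemma mg1_join_atoms_lub: "mg1_is_lub (At p) (At q) (mg1_join (At p) (At q))"
proof (cases "p = q")
  case True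
  then show ?thesis unfolding mg1_is_lub_def by auto
next
  case False
  from mg1_common_at_most_one[OF False] show ?thesis
  proof
    assume none: "mg1_common p q = []"
    have "\<not> (mg1_orth p r \<and> mg1_orth q r)" for r using mg1_common_iff[of r p q] none by auto
    then show ?thesis using False none unfolding mg1_is_lub_def
      by (auto simp: mg1_le_One) (case_tac w; auto)
  next
    assume "\<exists>r. mg1_common p q = [r]"
    then obtain r where single: "mg1_common p q = [r]" by blast
    have "mg1_orth p s \<and> mg1_orth q s \<longleftrightarrow> s = r" for s
      using mg1_common_iff[of s p q] single by auto
    then show ?thesis using False single unfolding mg1_is_lub_def
      by auto (case_tac w; auto; metis)
  qed
qed

lemma mg1_join_lub: "mg1_is_lub x y (mg1_join x y)"
  using mg1_join_atoms_lub
  by (cases x; cases y)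
     (auto simp: mg1_is_lub_def mg1_le_One mg1_le_refl dest: mg1_orth_sym,
      (case_tac w; auto dest: mg1_orth_sym)+)

lemma mg1_sup_eq_join: "mg1_sup = mg1_join"
proof (intro ext)
  fix x y
  show "mg1_sup x y = mg1_join x y"
    unfolding mg1_sup_def
    by (rule the_equality) (use mg1_join_lub[of x y] mg1_le_antisym in \<open>auto simp: mg1_is_lub_def\<close>)
qed

lemma mg1_join_upper1: "mg1_le x (mg1_join x y)"
  using mg1_join_lub unfolding mg1_is_lub_def by blast

lemma mg1_join_upper2: "mg1_le y (mg1_join x y)"
  using mg1_join_lub unfolding mg1_is_lub_def by blast

lemma mg1_join_least: "mg1_le x w \<Longrightarrow> mg1_le y w \<Longrightarrow> mg1_le (mg1_join x y) w"
  using mg1_join_lub unfolding mg1_is_lub_def by blast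

definition mg1_meet :: "mg1 \<Rightarrow> mg1 \<Rightarrow> mg1" where
  "mg1_meet x y = mg1_compl (mg1_join (mg1_compl x) (mg1_compl y))"

lemma mg1_meet_lower1: "mg1_le (mg1_meet x y) x"
  unfolding mg1_meet_def by (metis mg1_join_upper1 mg1_compl_compl mg1_le_compl_iff)

lemma mg1_meet_lower2: "mg1_le (mg1_meet x y) y"
  unfolding mg1_meet_def by (metis mg1_join_upper2 mg1_compl_compl mg1_le_compl_iff)

lemma mg1_meet_greatest: "mg1_le w x \<Longrightarrow> mg1_le w y \<Longrightarrow> mg1_le w (mg1_meet x y)"
  unfolding mg1_meet_def by (metis mg1_join_least mg1_compl_compl mg1_le_compl_iff)

lemma mg1_inf_eq_meet: "mg1_inf = mg1_meet"
proof (intro ext)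
  fix x y
  show "mg1_inf x y = mg1_meet x y"
    unfolding mg1_inf_def
    by (rule the_equality)
       (use mg1_meet_lower1 mg1_meet_lower2 mg1_meet_greatest mg1_le_antisym in blast)+
qed

text \<open>The only nontrivial case is an atom p below a coatom q'.  If r is
  the common neighbour of p and q, then p' \<sqinter> q' = r, and q is the common neighbour of
  p and r, so p \<squnion> (p' \<sqinter> q') = p \<squnion> r = q'.\<close>
lemma mg1_orthomodular: "mg1_le x y \<Longrightarrow> mg1_join x (mg1_meet (mg1_compl x) y) = y"
proof (cases x; cases y)
  fix p q
  assume le: "mg1_le x y" and x: "x = At p" and y: "y = Co q"
  then have pq: "mg1_orth p q" by simp
  then have "p \<noteq> q" using mg1_orth_irrefl by blast
  then obtain r where r: "mg1_common p q = [r]"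
    using mg1_common_at_most_one mg1_common_of_orth[OF pq] by blast
  then have "mg1_orth p r \<and> mg1_orth q r" using mg1_common_iff[of r p q] by simp
  then have pr: "mg1_orth p r" and qr: "mg1_orth q r" by blast+
  then have "p \<noteq> r" using mg1_orth_irrefl by blast
  moreover have "q \<in> set (mg1_common p r)" using mg1_common_iff pq qr mg1_orth_sym by blast
  ultimately have "mg1_common p r = [q]" using mg1_common_at_most_one by fastforce
  then show ?thesis using x y r \<open>p \<noteq> q\<close> \<open>p \<noteq> r\<close> unfolding mg1_meet_def by simp
qed (auto simp: mg1_meet_def mg1_orth_irrefl dest: mg1_orth_sym split: list.split)

lemma mg1_join_compl: "mg1_join x (mg1_compl x) = One"
  by (cases x) (auto simp: mg1_orth_irrefl)

lemma mg1_meet_compl: "mg1_meet x (mg1_compl x) = Zero"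
  by (cases x) (auto simp: mg1_orth_irrefl mg1_meet_def)

theorem mg1_orthomodular_lattice:
  "class.orthomodular_lattice mg1_minus mg1_compl mg1_inf mg1_le mg1_less mg1_sup Zero One"
  unfolding mg1_sup_eq_join mg1_inf_eq_meet
  by unfold_locales
     (auto simp: mg1_less_def mg1_minus_def mg1_sup_eq_join mg1_inf_eq_meet mg1_le_refl
        mg1_join_upper1 mg1_join_upper2 mg1_join_least mg1_meet_lower1 mg1_meet_lower2
        mg1_meet_greatest mg1_le_One mg1_compl_compl mg1_orthomodular mg1_join_compl
        mg1_meet_compl
        intro: mg1_le_antisym mg1_le_trans mg1_le_compl_iff[THEN iffD2])

theorem mg1_fails_eq12: "\<not> eq12 mg1_le mg1_sup mg1_inf mg1_compl (Co b1) (Co c2) (Co d1)"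
  by (simp add: eq12_def oimp_def mg1_sup_eq_join mg1_inf_eq_meet mg1_meet_def
      mg1_common_def mg1_orth_neighbours)

theorem mainTheorem12:
  shows "(admits_strong_set_of_states TYPE('a::orthomodular_lattice) \<longrightarrow>
            (\<forall>a b c :: 'a. eq12 (\<le>) sup inf uminus a b c))
       \<and> class.orthomodular_lattice mg1_minus mg1_compl mg1_inf mg1_le mg1_less mg1_sup Zero One
       \<and> \<not> (\<forall>a b c. eq12 mg1_le mg1_sup mg1_inf mg1_compl a b c)"
  using eq12_strong_states mg1_orthomodular_lattice mg1_fails_eq12 by blast

end
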